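(* Let $G$ be a compact connected Lie group of dimension $m\ge2$, with the notation of the context. Let $A\in\mathrm{GL}(m,\mathbb R)$, let $P\in\mathrm O(m)$ sort $A$, and let $1\le k\le m$. Then \[ \frac{\operatorname{diam}(G,g_I|^*_{\mathcal C_{P,k}})}{\sigma_k(A)}\le\operatorname{diam}(G,g_A)\le\frac{\operatorname{diam}(G,\mathcal H_{P,k},g_I|_{\mathcal H_{P,k}})}{\sigma_k(A)} . \]
   Context: Let $\mathfrak g$ be the Lie algebra of $G$; fix an $\operatorname{Ad}(G)$-invariant inner product $g_I$ on $\mathfrak g$ and a $g_I$-orthonormal basis $\{X_1,\dots,X_m\}$. For $A=(a_{ij})\in\mathrm{GL}(m,\mathbb R)$ put $X_j(A)=\sum_i a_{ij}X_i$, and let $g_A$ be the inner product on $\mathfrak g$ (equivalently left-invariant Riemannian metric on $G$) with orthonormal basis $\{X_1(A),\dots,X_m(A)\}$. Let $\sigma_1(A)\ge\dots\ge\sigma_m(A)>0$ with $\sigma_j(A)^2$ the eigenvalues of $AA^t$. $P\in\mathrm O(m)$ sorts $A$ if $AA^t=P\,\mathrm{diag}(\sigma_1(A)^2,\dots,\sigma_m(A)^2)P^t$. Set $\mathcal H_{P,k}=\mathrm{span}_{\mathbb R}\{X_1(P),\dots,X_k(P)\}$ and $\mathcal C_{P,k}=\mathrm{span}_{\mathbb R}\{X_k(P),\dots,X_m(P)\}$. For a subspace $\mathcal H$ with inner product $h$, $\operatorname{diam}(G,\mathcal H,h)\in(0,\infty]$ is the diameter of the left-invariant sub-Riemannian structure: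 horizontal curves satisfy $\gamma'(t)\in dL_{\gamma(t)}(\mathcal H)$ ($L_a$ left multiplication), length $\int h(dL_{\gamma(t)}^{-1}\gamma'(t),dL_{\gamma(t)}^{-1}\gamma'(t))^{1/2}dt$, distance = infimum over horizontal curves ($\infty$ if none), diameter = supremum of distances. For a positive semi-definite symmetric bilinear form $b$ on $\mathfrak g$, $\operatorname{diam}(G,b)$ is defined the same way using all smooth curves with length $\int b(dL_{\gamma(t)}^{-1}\gamma'(t),dL_{\gamma(t)}^{-1}\gamma'(t))^{1/2}dt$ (a pseudo-distance). For a subspace $\mathcal C$, $g_I|^*_{\mathcal C}$ is the form $g_I|^*_{\mathcal C}(X_1+X_2,Y_1+Y_2)=g_I(X_1,Y_1)$ for $X_1,Y_1\in\mathcal C$, $X_2,Y_2\in\mathcal C^{\perp_{g_I}}$. *)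

theory Defs
  imports "HOL-Analysis.Analysis" "Jordan_Normal_Form.Char_Poly"
begin

type_synonym 'n sqm = "real^'n^'n"

abbreviation idm :: "'n::finite sqm" where "idm \<equiv> Finite_Cartesian_Product.mat 1"

definition compact_connected_matrix_group :: "('n::finite) sqm set \<Rightarrow> bool" where
  "compact_connected_matrix_group G \<longleftrightarrow>
     G \<subseteq> {g. invertible g} \<and> idm \<in> G \<and>
     (\<forall>g\<in>G. \<forall>h\<in>G. g ** h \<in> G) \<and> (\<forall>g\<in>G. matrix_inv g \<in> G) \<and>
     compact G \<and> connected G"

definition lie_algebra :: "('n::finite) sqm set \<Rightarrow> 'n sqm set" where
  "lie_algebra G = {X. \<exists>\<gamma>. (\<forall>t. \<gamma> t \<in> G) \<and> \<gamma> 0 = idm \<and> (\<gamma> has_vector_derivative X) (at 0)}"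

definition smooth_curve :: "(real \<Rightarrow> 'a::real_normed_vector) \<Rightarrow> bool" where
  "smooth_curve \<gamma> \<longleftrightarrow> (\<exists>D::nat \<Rightarrow> real \<Rightarrow> 'a. D 0 = \<gamma> \<and>
      (\<forall>n. \<forall>t\<in>{0..1}. (D n has_vector_derivative D (Suc n) t) (at t within {0..1})))"

definition left_vel :: "(real \<Rightarrow> ('n::finite) sqm) \<Rightarrow> real \<Rightarrow> 'n sqm" where
  "left_vel \<gamma> t = matrix_inv (\<gamma> t) ** vector_derivative \<gamma> (at t within {0..1})"

definition curve_length :: "('n::finite sqm \<Rightarrow> 'n sqm \<Rightarrow> real) \<Rightarrow> (real \<Rightarrow> 'n sqm) \<Rightarrow> real" where
  "curve_length b \<gamma> = integral {0..1} (\<lambda>t. sqrt (b (left_vel \<gamma> t) (left_vel \<gamma> t)))"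

definition curve_in :: "('n::finite) sqm set \<Rightarrow> (real \<Rightarrow> 'n sqm) \<Rightarrow> 'n sqm \<Rightarrow> 'n sqm \<Rightarrow> bool" where
  "curve_in G \<gamma> p q \<longleftrightarrow> smooth_curve \<gamma> \<and> (\<forall>t\<in>{0..1}. \<gamma> t \<in> G) \<and> \<gamma> 0 = p \<and> \<gamma> 1 = q"

definition diam_form :: "('n::finite) sqm set \<Rightarrow> ('n sqm \<Rightarrow> 'n sqm \<Rightarrow> real) \<Rightarrow> ereal" where
  "diam_form G b = (SUP p\<in>G. SUP q\<in>G. INF \<gamma>\<in>{\<gamma>. curve_in G \<gamma> p q}. ereal (curve_length b \<gamma>))"

text \<open>Diameter of the left-invariant sub-Riemannian structure (H, h); Inf {} = \<infinity>.\<close>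
definition diam_sr :: "('n::finite) sqm set \<Rightarrow> 'n sqm set \<Rightarrow> ('n sqm \<Rightarrow> 'n sqm \<Rightarrow> real) \<Rightarrow> ereal" where
  "diam_sr G H h = (SUP p\<in>G. SUP q\<in>G. INF \<gamma>\<in>{\<gamma>. curve_in G \<gamma> p q \<and> (\<forall>t\<in>{0..1}. left_vel \<gamma> t \<in> H)}.
       ereal (curve_length h \<gamma>))"

definition basis_tw :: "nat \<Rightarrow> (nat \<Rightarrow> ('n::finite) sqm) \<Rightarrow> real mat \<Rightarrow> nat \<Rightarrow> 'n sqm" where
  "basis_tw m X A j = (\<Sum>i<m. (A $$ (i,j)) *\<^sub>R X i)"

text \<open>g_A: the inner product on the span with orthonormal basis X_0(A),...,X_{m-1}(A).\<close>
definition coords :: "nat \<Rightarrow> (nat \<Rightarrow> ('n::finite) sqm) \<Rightarrow> 'n sqm \<Rightarrow> nat \<Rightarrow> real" where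
  "coords m Y Z = (THE c. (\<forall>j\<ge>m. c j = 0) \<and> Z = (\<Sum>j<m. c j *\<^sub>R Y j))"

definition metric_A :: "nat \<Rightarrow> (nat \<Rightarrow> ('n::finite) sqm) \<Rightarrow> real mat \<Rightarrow> 'n sqm \<Rightarrow> 'n sqm \<Rightarrow> real" where
  "metric_A m X A Z W = (\<Sum>j<m. coords m (basis_tw m X A) Z j * coords m (basis_tw m X A) W j)"

definition orth_comp_part :: "('n::finite sqm \<Rightarrow> 'n sqm \<Rightarrow> real) \<Rightarrow> 'n sqm set \<Rightarrow> 'n sqm \<Rightarrow> 'n sqm" where
  "orth_comp_part g C Z = (THE Z1. Z1 \<in> C \<and> (\<forall>V\<in>C. g (Z - Z1) V = 0))"

definition restr_star :: "('n::finite sqm \<Rightarrow> 'n sqm \<Rightarrow> real) \<Rightarrow> 'n sqm set \<Rightarrow> 'n sqm \<Rightarrow> 'n sqm \<Rightarrow> real" where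
  "restr_star g C Z W = g (orth_comp_part g C Z) (orth_comp_part g C W)"

definition sing_vals :: "real mat \<Rightarrow> real list" where
  "sing_vals A = rev (sort (map sqrt (sorted_list_of_multiset (proots (char_poly (A * transpose_mat A))))))"

definition sigma :: "real mat \<Rightarrow> nat \<Rightarrow> real" where
  "sigma A k = sing_vals A ! (k - 1)"

definition sorts :: "nat \<Rightarrow> real mat \<Rightarrow> real mat \<Rightarrow> bool" where
  "sorts m P A \<longleftrightarrow> P \<in> carrier_mat m m \<and> P * transpose_mat P = 1\<^sub>m m \<and>
     A * transpose_mat A = P * Matrix.mat m m (\<lambda>(i,j). if i = j then (sigma A (i+1))\<^sup>2 else 0) * transpose_mat P"

end

theory Submission
  imports Defs
begin

(* Write Z in the Lie algebra in the rotated frame Y_j = X_j(P), with coefficients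
   w_j = g_I(Z, Y_j).  Since A A^t = P diag(sigma_j^2) P^t, the g_A-coordinates c of Z solve
   A c = (g_I(Z, X_i))_i and |c|^2 = sum_j w_j^2 / sigma_j^2.  The form g_I|^*_{C_{P,k}} only sees
   the w_j with j >= k, where sigma_j <= sigma_k, so it is at most sigma_k^2 g_A; a vector of
   H_{P,k} only has w_j with j <= k, where sigma_j >= sigma_k, so there sigma_k^2 g_A <= g_I.
   The left-trivialised velocities of curves in G lie in the Lie algebra, so these pointwise
   bounds integrate to bounds on lengths, and taking infima over curves and suprema over pairs
   of points gives both inequalities.  Only bilinearity of g_I and orthonormality of the X_i
   enter. *)

lemma invertible_mat_left_inverse:
  fixes A :: "'a::comm_ring_1 mat"
  assumes A: "A \<in> carrier_mat n n" and inv: "invertible_mat A"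
  obtains B where "B \<in> carrier_mat n n" "B * A = 1\<^sub>m n"
proof -
  from inv obtain B where AB: "A * B = 1\<^sub>m (dim_row A)" and BA: "B * A = 1\<^sub>m (dim_row B)"
    unfolding invertible_mat_def inverts_mat_def by blast
  have "dim_col B = n" using AB A by (metis carrier_matD(1) index_mult_mat(3) index_one_mat(3))
  moreover have "dim_row B = n" using BA A by (metis carrier_matD(2) index_mult_mat(3) index_one_mat(3))
  ultimately show ?thesis using that BA by auto
qed

lemma invertible_mat_det_nonzero:
  fixes A :: "'a::comm_ring_1 mat"
  assumes A: "A \<in> carrier_mat n n" and inv: "invertible_mat A"
  shows "det A \<noteq> 0"
proof
  assume "det A = 0"
  obtain B where B: "B \<in> carrier_mat n n" and BA: "B * A = 1\<^sub>m n"
    using invertible_mat_left_inverse[OF A inv] .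
  have "det B * det A = 1" using det_mult[OF B A] BA by simp
  with \<open>det A = 0\<close> show False by simp
qed

lemma invertible_mat_mult_vec_inj:
  fixes A :: "'a::comm_ring_1 mat"
  assumes A: "A \<in> carrier_mat n n" and inv: "invertible_mat A"
    and v: "v \<in> carrier_vec n" and w: "w \<in> carrier_vec n" and eq: "A *\<^sub>v v = A *\<^sub>v w"
  shows "v = w"
proof -
  obtain B where B: "B \<in> carrier_mat n n" and BA: "B * A = 1\<^sub>m n"
    using invertible_mat_left_inverse[OF A inv] .
  have "v = (B * A) *\<^sub>v v" using BA v by simp
  also have "\<dots> = B *\<^sub>v (A *\<^sub>v w)" using B A v eq by simp
  also have "\<dots> = (B * A) *\<^sub>v w" using B A w by simp
  finally show ?thesis using BA w by simp
qed

lemma mult_transpose_mat_index: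
  fixes P :: "'a::comm_ring_1 mat"
  assumes "P \<in> carrier_mat n n" "i < n" "j < n"
  shows "(P * transpose_mat P) $$ (i, j) = (\<Sum>l<n. P $$ (i, l) * P $$ (j, l))"
    and "(transpose_mat P * P) $$ (i, j) = (\<Sum>l<n. P $$ (l, i) * P $$ (l, j))"
  using assms by (simp_all add: scalar_prod_def lessThan_atLeast0)

locale sorting =
  fixes m :: nat and A P :: "real mat"
  assumes A_carrier: "A \<in> carrier_mat m m"
    and A_invertible: "invertible_mat A"
    and P_sorts_A: "sorts m P A"
begin

text \<open>Frame indices run over \<open>0..<m\<close> while \<open>sigma A\<close> is indexed from 1, whence the shifts
  \<open>j + 1\<close> and \<open>k - 1\<close> throughout.\<close>

definition sq_sigma_diag :: "real mat" where
  "sq_sigma_diag = Matrix.mat m m (\<lambda>(i, j). if i = j then (sigma A (i + 1))\<^sup>2 else 0)"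

lemma P_carrier: "P \<in> carrier_mat m m"
  and P_Pt: "P * transpose_mat P = 1\<^sub>m m"
  and A_At: "A * transpose_mat A = P * sq_sigma_diag * transpose_mat P"
  using P_sorts_A unfolding sorts_def sq_sigma_diag_def by auto

lemma Pt_P: "transpose_mat P * P = 1\<^sub>m m"
  using mat_mult_left_right_inverse[OF P_carrier _ P_Pt] P_carrier by simp

lemma sq_sigma_diag_carrier: "sq_sigma_diag \<in> carrier_mat m m"
  and upper_triangular_sq_sigma_diag: "upper_triangular sq_sigma_diag"
  and diag_sq_sigma_diag: "diag_mat sq_sigma_diag = map (\<lambda>i. (sigma A (i + 1))\<^sup>2) [0..<m]"
  unfolding sq_sigma_diag_def upper_triangular_def diag_mat_def by auto

lemma proots_char_poly_A_At:
  "proots (char_poly (A * transpose_mat A)) = mset (map (\<lambda>i. (sigma A (i + 1))\<^sup>2) [0..<m])"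
proof -
  define ds where "ds = map (\<lambda>i. (sigma A (i + 1))\<^sup>2) [0..<m]"
  have "char_poly (A * transpose_mat A) = char_poly sq_sigma_diag"
    by (intro char_poly_similar similar_matI[where P = P and Q = "transpose_mat P"])
      (use P_carrier P_Pt Pt_P A_At sq_sigma_diag_carrier in auto)
  also have "\<dots> = (\<Prod>a\<leftarrow>ds. [:- a, 1:])"
    using char_poly_upper_triangular[OF sq_sigma_diag_carrier upper_triangular_sq_sigma_diag]
      diag_sq_sigma_diag ds_def by simp
  finally have "proots (char_poly (A * transpose_mat A)) = proots (\<Prod>a\<leftarrow>ds. [:- a, 1:])"
    by simp
  also have "\<dots> = (\<Sum>a\<leftarrow>ds. proots [:- a, 1:])"
  proof -
    have "0 \<notin> set (map (\<lambda>a. [:- a, 1:]) ds)" by auto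
    from proots_prod_list[OF this] show ?thesis by (simp add: o_def)
  qed
  also have "\<dots> = mset ds" by (induction ds) auto
  finally show ?thesis unfolding ds_def .
qed

lemma sing_vals_eq:
  "sing_vals A = rev (sort (map sqrt (sort (map (\<lambda>i. (sigma A (i + 1))\<^sup>2) [0..<m]))))"
  unfolding sing_vals_def proots_char_poly_A_At by (simp only: sorted_list_of_multiset_mset)

lemma length_sing_vals: "length (sing_vals A) = m"
  unfolding sing_vals_eq by simp

lemma sigma_nonzero:
  assumes "1 \<le> i" "i \<le> m"
  shows "sigma A i \<noteq> 0"
proof -
  have "det A * det A \<noteq> 0" using invertible_mat_det_nonzero[OF A_carrier A_invertible] by simp
  then have "det (A * transpose_mat A) \<noteq> 0"
    using det_mult[OF A_carrier, of "transpose_mat A"] det_transpose[OF A_carrier] A_carrier by simp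
  then have "det sq_sigma_diag \<noteq> 0"
    using A_At det_mult P_carrier sq_sigma_diag_carrier
    by (metis mult_carrier_mat mult_zero_left mult_zero_right transpose_carrier_mat)
  then have "prod_list (map (\<lambda>i. (sigma A (i + 1))\<^sup>2) [0..<m]) \<noteq> 0"
    using det_upper_triangular[OF upper_triangular_sq_sigma_diag sq_sigma_diag_carrier]
      diag_sq_sigma_diag by simp
  then have "\<forall>l\<in>{0..<m}. (sigma A (l + 1))\<^sup>2 \<noteq> 0" by (auto simp: prod_list_zero_iff)
  from this[rule_format, of "i - 1"] show ?thesis using assms by simp
qed

lemma sigma_pos:
  assumes "1 \<le> i" "i \<le> m"
  shows "0 < sigma A i"
proof -
  have "sigma A i \<in> set (sing_vals A)"
    unfolding sigma_def using assms length_sing_vals by simp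
  then have "0 \<le> sigma A i" unfolding sing_vals_eq by auto
  then show ?thesis using sigma_nonzero[OF assms] by simp
qed

lemma sigma_antimono:
  assumes "1 \<le> i" "i \<le> j" "j \<le> m"
  shows "sigma A j \<le> sigma A i"
proof -
  have "sorted (rev (sing_vals A))" unfolding sing_vals_eq by simp
  then have "rev (sing_vals A) ! (m - j) \<le> rev (sing_vals A) ! (m - i)"
    using assms length_sing_vals by (intro sorted_nth_mono) auto
  then show ?thesis unfolding sigma_def using assms length_sing_vals by (simp add: rev_nth)
qed

lemma sq_sigma_ratio_ge_1:
  assumes "1 \<le> k" "k \<le> i" "i \<le> m"
  shows "1 \<le> (sigma A k)\<^sup>2 / (sigma A i)\<^sup>2"
  using sigma_antimono[OF assms] sigma_pos[of i] assms by (simp add: power_mono)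

lemma sq_sigma_ratio_le_1:
  assumes "1 \<le> i" "i \<le> k" "k \<le> m"
  shows "(sigma A k)\<^sup>2 / (sigma A i)\<^sup>2 \<le> 1"
  using sigma_antimono[OF assms] sigma_pos[of k] sigma_pos[of i] assms by (simp add: power_mono)

lemma A_mult_vec_preimage:
  assumes x: "x \<in> carrier_vec m"
  obtains c where "c \<in> carrier_vec m" "A *\<^sub>v c = x"
    "scalar_prod c c = (\<Sum>j<m. (vec_index (transpose_mat P *\<^sub>v x) j)\<^sup>2 / (sigma A (j + 1))\<^sup>2)"
proof -
  \<comment> \<open>With D = sq_sigma_diag take c = A^t P D^-1 P^t x, so that A c = P D P^t P D^-1 P^t x = x.\<close>
  define w where "w = transpose_mat P *\<^sub>v x"
  define u where "u = vec m (\<lambda>j. vec_index w j / (sigma A (j + 1))\<^sup>2)"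
  define c where "c = transpose_mat A *\<^sub>v (P *\<^sub>v u)"
  have w: "w \<in> carrier_vec m" and u: "u \<in> carrier_vec m" and Pu: "P *\<^sub>v u \<in> carrier_vec m"
    and c: "c \<in> carrier_vec m"
    unfolding w_def u_def c_def using P_carrier A_carrier x by auto
  have Du: "sq_sigma_diag *\<^sub>v u = w"
  proof (rule eq_vecI)
    fix j assume "j < dim_vec w"
    then have j: "j < m" using w by simp
    have "vec_index (sq_sigma_diag *\<^sub>v u) j
        = (\<Sum>l\<in>{0..<m}. (if j = l then (sigma A (j + 1))\<^sup>2 else 0) * vec_index u l)"
      using j u by (simp add: sq_sigma_diag_def scalar_prod_def)
    also have "\<dots> = (sigma A (j + 1))\<^sup>2 * vec_index u j"
      using j by (simp add: if_distrib[of "\<lambda>a. a * _"] cong: if_cong)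
    also have "\<dots> = vec_index w j" using j sigma_nonzero[of "j + 1"] by (simp add: u_def)
    finally show "vec_index (sq_sigma_diag *\<^sub>v u) j = vec_index w j" .
  qed (use w sq_sigma_diag_carrier in simp)
  have "A *\<^sub>v c = (P * sq_sigma_diag * transpose_mat P) *\<^sub>v (P *\<^sub>v u)"
    unfolding c_def A_At[symmetric] using A_carrier Pu by simp
  also have "\<dots> = P *\<^sub>v (sq_sigma_diag *\<^sub>v ((transpose_mat P * P) *\<^sub>v u))"
    using P_carrier sq_sigma_diag_carrier u Pu by (simp add: assoc_mult_mat_vec[of _ m m _ m])
  also have "\<dots> = (P * transpose_mat P) *\<^sub>v x"
    using Pt_P u Du P_carrier x unfolding w_def by simp
  finally have Ac: "A *\<^sub>v c = x" using P_Pt x by simp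
  have "scalar_prod c c = scalar_prod (P *\<^sub>v u) (A *\<^sub>v c)"
    unfolding c_def using transpose_vec_mult_scalar[OF A_carrier _ Pu] c c_def by simp
  also have "\<dots> = scalar_prod u w"
    unfolding Ac w_def using transpose_vec_mult_scalar[of "transpose_mat P" m m x u] P_carrier x u
    by simp
  also have "\<dots> = (\<Sum>j<m. (vec_index w j)\<^sup>2 / (sigma A (j + 1))\<^sup>2)"
    unfolding scalar_prod_def u_def using w
    by (auto simp: power2_eq_square lessThan_atLeast0 intro!: sum.cong)
  finally show ?thesis using that c Ac unfolding w_def by blast
qed

end

lemma sum_scaleR_sum_swap:
  "(\<Sum>j\<in>J. c j *\<^sub>R (\<Sum>i\<in>I. M i j *\<^sub>R (V i :: 'a::real_vector)))
    = (\<Sum>i\<in>I. (\<Sum>j\<in>J. M i j * c j) *\<^sub>R V i)"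
  by (simp add: scaleR_sum_right scaleR_sum_left sum.swap[of _ J I] mult.commute)

locale orthonormal_frame =
  fixes g :: "'a::euclidean_space \<Rightarrow> 'a \<Rightarrow> real" and X :: "nat \<Rightarrow> 'a" and m :: nat
  assumes bilinear_g: "bilinear g"
    and orthonormal: "\<And>i j. i < m \<Longrightarrow> j < m \<Longrightarrow> g (X i) (X j) = (if i = j then 1 else 0)"
begin

lemma linear_left: "linear (\<lambda>Z. g Z W)"
  and linear_right: "linear (g Z)"
  using bilinear_g unfolding bilinear_def by auto

lemma sum_left: "g (\<Sum>i\<in>S. f i) W = (\<Sum>i\<in>S. g (f i) W)"
  and sum_right: "g Z (\<Sum>i\<in>S. f i) = (\<Sum>i\<in>S. g Z (f i))"
  and scale_left: "g (c *\<^sub>R Z) W = c * g Z W"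
  and scale_right: "g Z (c *\<^sub>R W) = c * g Z W"
  using linear_sum[OF linear_left] linear_sum[OF linear_right]
    linear_scale[OF linear_left] linear_scale[OF linear_right] by (simp_all add: o_def)

lemmas add_left = bilinear_ladd[OF bilinear_g]
  and add_right = bilinear_radd[OF bilinear_g]
  and diff_left = bilinear_lsub[OF bilinear_g]
  and zero_left = bilinear_lzero[OF bilinear_g]
  and zero_right = bilinear_rzero[OF bilinear_g]

lemma inner_sum_frame:
  assumes "S \<subseteq> {..<m}" "l < m"
  shows "g (\<Sum>j\<in>S. c j *\<^sub>R X j) (X l) = (if l \<in> S then c l else 0)"
proof -
  have "g (\<Sum>j\<in>S. c j *\<^sub>R X j) (X l) = (\<Sum>j\<in>S. if j = l then c j else 0)"
    using assms orthonormal by (auto simp: sum_left scale_left intro!: sum.cong)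
  then show ?thesis using finite_subset[OF assms(1)] by (simp add: sum.delta')
qed

lemma frame_expansion:
  assumes S: "S \<subseteq> {..<m}" and Z: "Z \<in> span (X ` S)"
  shows "Z = (\<Sum>j\<in>S. g Z (X j) *\<^sub>R X j)"
  using Z
proof (induction rule: span_induct_alt)
  case base
  then show ?case by (simp add: zero_left)
next
  case (step c x y)
  then obtain s where s: "s \<in> S" "x = X s" by auto
  have "g x (X j) *\<^sub>R X j = (if j = s then X j else 0)" if "j \<in> S" for j
  proof -
    have "s < m" "j < m" using that s S by auto
    then show ?thesis using orthonormal[of s j] s by auto
  qed
  then have "(\<Sum>j\<in>S. g x (X j) *\<^sub>R X j) = (\<Sum>j\<in>S. if j = s then X j else 0)"
    by (rule sum.cong[OF refl])
  also have "\<dots> = x" using s finite_subset[OF S] by (simp add: sum.delta)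
  finally have x: "(\<Sum>j\<in>S. g x (X j) *\<^sub>R X j) = x" .
  have "(\<Sum>j\<in>S. g (c *\<^sub>R x + y) (X j) *\<^sub>R X j)
      = c *\<^sub>R (\<Sum>j\<in>S. g x (X j) *\<^sub>R X j) + (\<Sum>j\<in>S. g y (X j) *\<^sub>R X j)"
    by (simp add: add_left scale_left scaleR_add_left sum.distrib scaleR_sum_right)
  with x step(2) show ?case by simp
qed

lemma coeff_eq_0:
  assumes "S \<subseteq> {..<m}" "Z \<in> span (X ` S)" "j < m" "j \<notin> S"
  shows "g Z (X j) = 0"
  using inner_sum_frame[OF assms(1,3)] frame_expansion[OF assms(1,2)] assms(4) by metis

lemma frame_eqI:
  assumes "Z \<in> span (X ` {..<m})" "W \<in> span (X ` {..<m})" "\<And>l. l < m \<Longrightarrow> g Z (X l) = g W (X l)"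
  shows "Z = W"
  using frame_expansion[OF _ assms(1)] frame_expansion[OF _ assms(2)] assms(3) by simp

definition coeff_sq_sum :: "(nat \<Rightarrow> real) \<Rightarrow> 'a \<Rightarrow> real" where
  "coeff_sq_sum a Z = (\<Sum>j<m. a j * (g Z (X j))\<^sup>2)"

lemma self_inner_eq_coeff_sq_sum:
  assumes "Z \<in> span (X ` {..<m})"
  shows "g Z Z = coeff_sq_sum (\<lambda>_. 1) Z"
proof -
  have "g Z Z = g Z (\<Sum>j<m. g Z (X j) *\<^sub>R X j)" using frame_expansion[OF _ assms] by simp
  then show ?thesis unfolding coeff_sq_sum_def by (simp add: sum_right scale_right power2_eq_square)
qed

lemma self_inner_eq_0:
  assumes Z: "Z \<in> span (X ` {..<m})" and "g Z Z = 0"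
  shows "Z = 0"
proof -
  have "(\<Sum>j<m. (g Z (X j))\<^sup>2) = 0"
    using self_inner_eq_coeff_sq_sum[OF Z] assms(2) unfolding coeff_sq_sum_def by simp
  then have "\<forall>j<m. g Z (X j) = 0" by (simp add: sum_nonneg_eq_0_iff)
  then show ?thesis using frame_expansion[OF _ Z] by simp
qed

lemma coeff_sq_sum_mult: "coeff_sq_sum (\<lambda>j. c * a j) Z = c * coeff_sq_sum a Z"
  unfolding coeff_sq_sum_def by (simp add: sum_distrib_left mult.assoc)

lemma coeff_sq_sum_mono:
  assumes "\<And>j. j < m \<Longrightarrow> g Z (X j) \<noteq> 0 \<Longrightarrow> a j \<le> b j"
  shows "coeff_sq_sum a Z \<le> coeff_sq_sum b Z"
  unfolding coeff_sq_sum_def using assms by (intro sum_mono) (force intro: mult_right_mono)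

lemma continuous_on_coeff_sq_sum:
  assumes "continuous_on S f"
  shows "continuous_on S (\<lambda>t. coeff_sq_sum a (f t))"
proof -
  have "continuous_on S (\<lambda>t. g (f t) (X j))" for j
    using linear_continuous_on[OF linear_conv_bounded_linear[THEN iffD1, OF linear_left]]
    by (rule continuous_on_compose2[OF _ assms subset_UNIV])
  then show ?thesis unfolding coeff_sq_sum_def by (intro continuous_intros)
qed

end

lemma basis_tw_in_span: "basis_tw m X A j \<in> span (X ` {..<m})"
  unfolding basis_tw_def by (intro span_sum span_scale span_base; simp)

lemma orthonormal_frame_basis_tw:
  fixes g :: "'n::finite sqm \<Rightarrow> 'n sqm \<Rightarrow> real"
  assumes "orthonormal_frame g X m"
    and P: "P \<in> carrier_mat m m" and P_Pt: "P * transpose_mat P = 1\<^sub>m m"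
  shows "orthonormal_frame g (basis_tw m X P) m"
    and "span (basis_tw m X P ` {..<m}) = span (X ` {..<m})"
proof -
  interpret orthonormal_frame g X m by fact
  let ?Y = "basis_tw m X P"
  have Pt_P: "transpose_mat P * P = 1\<^sub>m m"
    using mat_mult_left_right_inverse[OF P _ P_Pt] P by simp
  have YX: "g (?Y a) (X l) = P $$ (l, a)" if "l < m" for a l
    unfolding basis_tw_def using inner_sum_frame[of "{..<m}"] that by simp
  have "g (?Y a) (?Y b) = (transpose_mat P * P) $$ (a, b)" if "a < m" "b < m" for a b
    unfolding basis_tw_def[of m X P b] mult_transpose_mat_index(2)[OF P that]
    by (simp add: sum_right scale_right YX mult.commute)
  then show "orthonormal_frame g ?Y m"
    using Pt_P by unfold_locales (simp_all add: bilinear_g)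
  have X_eq: "X i = (\<Sum>j<m. P $$ (i, j) *\<^sub>R ?Y j)" if i: "i < m" for i
  proof -
    have "(\<Sum>j<m. P $$ (i, j) *\<^sub>R ?Y j) = (\<Sum>l<m. (P * transpose_mat P) $$ (i, l) *\<^sub>R X l)"
      unfolding basis_tw_def sum_scaleR_sum_swap
      by (intro sum.cong) (simp_all add: mult_transpose_mat_index(1)[OF P i] mult.commute)
    also have "\<dots> = X i" using P_Pt i by (simp add: if_distrib[of "\<lambda>c. c *\<^sub>R _"] cong: if_cong)
    finally show ?thesis by simp
  qed
  have "X i \<in> span (?Y ` {..<m})" if "i < m" for i
    by (subst X_eq[OF that]) (intro span_sum span_scale span_base; simp)
  then have "X ` {..<m} \<subseteq> span (?Y ` {..<m})" by auto
  moreover have "?Y ` {..<m} \<subseteq> span (X ` {..<m})" using basis_tw_in_span by auto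
  ultimately show "span (?Y ` {..<m}) = span (X ` {..<m})" by (simp add: span_eq)
qed

lemma orth_comp_part_span_frame:
  fixes g :: "'n::finite sqm \<Rightarrow> 'n sqm \<Rightarrow> real"
  assumes "orthonormal_frame g X m" and S: "S \<subseteq> {..<m}" and Z: "Z \<in> span (X ` {..<m})"
  shows "orth_comp_part g (span (X ` S)) Z = (\<Sum>j\<in>S. g Z (X j) *\<^sub>R X j)"
proof -
  interpret orthonormal_frame g X m by fact
  let ?C = "span (X ` S)"
  let ?Z\<^sub>1 = "\<Sum>j\<in>S. g Z (X j) *\<^sub>R X j"
  have Z\<^sub>1: "?Z\<^sub>1 \<in> ?C" by (intro span_sum span_scale span_base) auto
  have "?C \<subseteq> span (X ` {..<m})" using S by (intro span_mono) auto
  have orth: "g (Z - ?Z\<^sub>1) V = 0" if "V \<in> ?C" for V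
    using that
  proof (induction rule: span_induct_alt)
    case base
    then show ?case by (simp add: zero_right)
  next
    case (step c x y)
    then obtain s where s: "s \<in> S" "x = X s" by auto
    have "s < m" using s S by auto
    have "Z = (\<Sum>j\<in>{..<m} - S. g Z (X j) *\<^sub>R X j) + ?Z\<^sub>1"
      using frame_expansion[OF _ Z] sum.subset_diff[OF S, of "\<lambda>j. g Z (X j) *\<^sub>R X j"] by simp
    then have "Z - ?Z\<^sub>1 = (\<Sum>j\<in>{..<m} - S. g Z (X j) *\<^sub>R X j)" by (simp only: diff_eq_eq)
    then have "g (Z - ?Z\<^sub>1) x = 0" using inner_sum_frame[of "{..<m} - S"] s \<open>s < m\<close> by auto
    then show ?case using step by (simp add: add_right scale_right)
  qed
  show ?thesis
  proof (unfold orth_comp_part_def, rule the_equality)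
    show "?Z\<^sub>1 \<in> ?C \<and> (\<forall>V\<in>?C. g (Z - ?Z\<^sub>1) V = 0)" using Z\<^sub>1 orth by blast
  next
    fix W assume W: "W \<in> ?C \<and> (\<forall>V\<in>?C. g (Z - W) V = 0)"
    have D: "?Z\<^sub>1 - W \<in> ?C" using W Z\<^sub>1 span_diff by blast
    have "g (?Z\<^sub>1 - W) (?Z\<^sub>1 - W) = g (Z - W) (?Z\<^sub>1 - W) - g (Z - ?Z\<^sub>1) (?Z\<^sub>1 - W)"
      by (simp add: diff_left[symmetric])
    also have "\<dots> = 0" using W orth D by simp
    finally have "?Z\<^sub>1 - W = 0" using self_inner_eq_0 D \<open>?C \<subseteq> span (X ` {..<m})\<close> by blast
    then show "W = ?Z\<^sub>1" by simp
  qed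
qed

lemma restr_star_span_frame:
  fixes g :: "'n::finite sqm \<Rightarrow> 'n sqm \<Rightarrow> real"
  assumes "orthonormal_frame g X m" and S: "S \<subseteq> {..<m}" and Z: "Z \<in> span (X ` {..<m})"
  shows "restr_star g (span (X ` S)) Z Z
    = orthonormal_frame.coeff_sq_sum g X m (\<lambda>j. if j \<in> S then 1 else 0) Z"
proof -
  interpret orthonormal_frame g X m by fact
  let ?Z\<^sub>1 = "\<Sum>j\<in>S. g Z (X j) *\<^sub>R X j"
  have "?Z\<^sub>1 \<in> span (X ` {..<m})" using S by (intro span_sum span_scale span_base) auto
  then have "restr_star g (span (X ` S)) Z Z = coeff_sq_sum (\<lambda>_. 1) ?Z\<^sub>1"
    unfolding restr_star_def orth_comp_part_span_frame[OF assms]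
    by (rule self_inner_eq_coeff_sq_sum)
  also have "\<dots> = coeff_sq_sum (\<lambda>j. if j \<in> S then 1 else 0) Z"
    unfolding coeff_sq_sum_def using inner_sum_frame[OF S] by (intro sum.cong) auto
  finally show ?thesis .
qed

lemma sqrt_le_mult_sqrt: "0 \<le> c \<Longrightarrow> x \<le> c\<^sup>2 * y \<Longrightarrow> sqrt x \<le> c * sqrt y"
  by (metis abs_of_nonneg real_sqrt_abs real_sqrt_le_mono real_sqrt_mult)

lemma mult_sqrt_le_sqrt: "0 \<le> c \<Longrightarrow> c\<^sup>2 * y \<le> x \<Longrightarrow> c * sqrt y \<le> sqrt x"
  by (metis abs_of_nonneg real_sqrt_abs real_sqrt_le_mono real_sqrt_mult)

lemma curve_length_mono_scaled:
  fixes b b' :: "'n::finite sqm \<Rightarrow> 'n sqm \<Rightarrow> real"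
  assumes cont: "continuous_on {0..1} (\<lambda>t. sqrt (b (left_vel \<gamma> t) (left_vel \<gamma> t)))"
    and cont': "continuous_on {0..1} (\<lambda>t. sqrt (b' (left_vel \<gamma> t) (left_vel \<gamma> t)))"
    and le: "\<And>t. t \<in> {0..1} \<Longrightarrow>
      c * sqrt (b (left_vel \<gamma> t) (left_vel \<gamma> t)) \<le> d * sqrt (b' (left_vel \<gamma> t) (left_vel \<gamma> t))"
  shows "c * curve_length b \<gamma> \<le> d * curve_length b' \<gamma>"
proof -
  let ?F = "\<lambda>t. sqrt (b (left_vel \<gamma> t) (left_vel \<gamma> t))"
  let ?F' = "\<lambda>t. sqrt (b' (left_vel \<gamma> t) (left_vel \<gamma> t))"
  have "c * integral {0..1} ?F = integral {0..1} (\<lambda>t. c * ?F t)"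
    by (rule integral_mult[OF integrable_continuous_interval[OF cont]])
  also have "\<dots> \<le> integral {0..1} (\<lambda>t. d * ?F' t)"
    using le by (intro integral_le integrable_continuous_interval continuous_on_mult_left cont cont') auto
  also have "\<dots> = d * integral {0..1} ?F'"
    by (rule integral_mult[OF integrable_continuous_interval[OF cont'], symmetric])
  finally show ?thesis unfolding curve_length_def .
qed

locale sorted_frame = orthonormal_frame g X m + sorting m A P
  for g :: "'n::finite sqm \<Rightarrow> 'n sqm \<Rightarrow> real" and X m A P
begin

abbreviation Y :: "nat \<Rightarrow> 'n sqm" where "Y \<equiv> basis_tw m X P"

sublocale Y: orthonormal_frame g Y m
  using orthonormal_frame_basis_tw(1)[OF orthonormal_frame_axioms P_carrier P_Pt] .

lemma span_Y: "span (Y ` {..<m}) = span (X ` {..<m})"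
  using orthonormal_frame_basis_tw(2)[OF orthonormal_frame_axioms P_carrier P_Pt] .

lemma coords_basis_tw:
  assumes Z: "Z \<in> span (X ` {..<m})"
    and c: "c \<in> carrier_vec m" "A *\<^sub>v c = vec m (\<lambda>l. g Z (X l))"
  shows "coords m (basis_tw m X A) Z = (\<lambda>j. if j < m then vec_index c j else 0)"
proof -
  have inner_X: "g (\<Sum>j<m. d j *\<^sub>R basis_tw m X A j) (X l) = vec_index (A *\<^sub>v vec m d) l"
    if "l < m" for d l
    unfolding basis_tw_def sum_scaleR_sum_swap using inner_sum_frame[of "{..<m}"] that A_carrier
    by (simp add: scalar_prod_def lessThan_atLeast0)
  show ?thesis
  proof (unfold coords_def, rule the_equality)
    let ?c = "\<lambda>j. if j < m then vec_index c j else 0"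
    have "g (\<Sum>j<m. ?c j *\<^sub>R basis_tw m X A j) (X l) = g Z (X l)" if "l < m" for l
    proof -
      have "vec m ?c = c" using c(1) by auto
      then have "g (\<Sum>j<m. ?c j *\<^sub>R basis_tw m X A j) (X l) = vec_index (A *\<^sub>v c) l"
        using inner_X[OF that, of ?c] by (simp only:)
      then show ?thesis using c(2) that by simp
    qed
    then have "Z = (\<Sum>j<m. ?c j *\<^sub>R basis_tw m X A j)"
      using Z by (intro frame_eqI) (auto intro: span_sum span_scale basis_tw_in_span)
    then show "(\<forall>j\<ge>m. ?c j = 0) \<and> Z = (\<Sum>j<m. ?c j *\<^sub>R basis_tw m X A j)" by simp
  next
    fix d assume d: "(\<forall>j\<ge>m. d j = 0) \<and> Z = (\<Sum>j<m. d j *\<^sub>R basis_tw m X A j)"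
    have "A *\<^sub>v vec m d = A *\<^sub>v c"
    proof (rule eq_vecI)
      fix l assume "l < dim_vec (A *\<^sub>v c)"
      then have "l < m" using A_carrier by simp
      then show "vec_index (A *\<^sub>v vec m d) l = vec_index (A *\<^sub>v c) l"
        using inner_X[of l d] d c(2) by simp
    qed (use A_carrier in simp)
    then have "vec m d = c" using invertible_mat_mult_vec_inj[OF A_carrier A_invertible _ c(1)] by simp
    then show "d = (\<lambda>j. if j < m then vec_index c j else 0)" using d by (auto simp: fun_eq_iff)
  qed
qed

lemma coeff_Y: "g Z (Y j) = (\<Sum>l<m. P $$ (l, j) * g Z (X l))"
  unfolding basis_tw_def by (simp add: sum_right scale_right)

lemma metric_A_eq:
  assumes Z: "Z \<in> span (X ` {..<m})"
  shows "metric_A m X A Z Z = Y.coeff_sq_sum (\<lambda>j. 1 / (sigma A (j + 1))\<^sup>2) Z"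
proof -
  define x where "x = vec m (\<lambda>l. g Z (X l))"
  have "x \<in> carrier_vec m" unfolding x_def by simp
  then obtain c where c: "c \<in> carrier_vec m" "A *\<^sub>v c = x"
    and cc: "scalar_prod c c = (\<Sum>j<m. (vec_index (transpose_mat P *\<^sub>v x) j)\<^sup>2 / (sigma A (j + 1))\<^sup>2)"
    by (rule A_mult_vec_preimage)
  have Ptx: "vec_index (transpose_mat P *\<^sub>v x) j = g Z (Y j)" if "j < m" for j
    unfolding coeff_Y x_def using that P_carrier
    by (simp add: scalar_prod_def lessThan_atLeast0 mult.commute)
  have "metric_A m X A Z Z = scalar_prod c c"
    unfolding metric_A_def coords_basis_tw[OF Z c(1) c(2)[unfolded x_def]] using c(1)
    by (simp add: scalar_prod_def lessThan_atLeast0)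
  also have "\<dots> = Y.coeff_sq_sum (\<lambda>j. 1 / (sigma A (j + 1))\<^sup>2) Z"
    unfolding cc Y.coeff_sq_sum_def by (intro sum.cong) (simp_all add: Ptx)
  finally show ?thesis .
qed

lemma self_inner_eq_coeff_sq_sum_Y:
  "Z \<in> span (X ` {..<m}) \<Longrightarrow> g Z Z = Y.coeff_sq_sum (\<lambda>_. 1) Z"
  using Y.self_inner_eq_coeff_sq_sum span_Y by simp

lemma restr_star_eq_coeff_sq_sum_Y:
  "S \<subseteq> {..<m} \<Longrightarrow> Z \<in> span (X ` {..<m}) \<Longrightarrow>
    restr_star g (span (Y ` S)) Z Z = Y.coeff_sq_sum (\<lambda>j. if j \<in> S then 1 else 0) Z"
  using restr_star_span_frame[OF Y.orthonormal_frame_axioms] span_Y by simp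

lemma restr_star_le_metric_A:
  assumes k: "1 \<le> k" "k \<le> m" and Z: "Z \<in> span (X ` {..<m})"
  shows "restr_star g (span (Y ` {k - 1..<m})) Z Z \<le> (sigma A k)\<^sup>2 * metric_A m X A Z Z"
proof -
  have "restr_star g (span (Y ` {k - 1..<m})) Z Z
      = Y.coeff_sq_sum (\<lambda>j. if j \<in> {k - 1..<m} then 1 else 0) Z"
    by (intro restr_star_eq_coeff_sq_sum_Y Z) auto
  also have "\<dots> \<le> Y.coeff_sq_sum (\<lambda>j. (sigma A k)\<^sup>2 * (1 / (sigma A (j + 1))\<^sup>2)) Z"
    using sq_sigma_ratio_ge_1 k by (intro Y.coeff_sq_sum_mono) auto
  finally show ?thesis unfolding Y.coeff_sq_sum_mult metric_A_eq[OF Z] .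
qed

lemma metric_A_le_horizontal:
  assumes k: "1 \<le> k" "k \<le> m" and Z: "Z \<in> span (Y ` {..<k})"
  shows "(sigma A k)\<^sup>2 * metric_A m X A Z Z \<le> g Z Z"
proof -
  have "Y ` {..<k} \<subseteq> Y ` {..<m}" using k by auto
  then have Z': "Z \<in> span (X ` {..<m})" using Z span_mono span_Y by blast
  have "(sigma A k)\<^sup>2 * metric_A m X A Z Z
      = Y.coeff_sq_sum (\<lambda>j. (sigma A k)\<^sup>2 * (1 / (sigma A (j + 1))\<^sup>2)) Z"
    unfolding Y.coeff_sq_sum_mult metric_A_eq[OF Z'] ..
  also have "\<dots> \<le> Y.coeff_sq_sum (\<lambda>_. 1) Z"
  proof (rule Y.coeff_sq_sum_mono)
    fix j assume "j < m" "g Z (Y j) \<noteq> 0"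
    then have "j < k" using Y.coeff_eq_0[of "{..<k}" Z j] Z k by auto
    then show "(sigma A k)\<^sup>2 * (1 / (sigma A (j + 1))\<^sup>2) \<le> 1"
      using sq_sigma_ratio_le_1[of "j + 1" k] k by simp
  qed
  finally show ?thesis using self_inner_eq_coeff_sq_sum_Y[OF Z'] by simp
qed

lemma continuous_on_sqrt_coeff_form:
  assumes lv: "continuous_on {0..1} (left_vel \<gamma>)" "\<And>t. t \<in> {0..1} \<Longrightarrow> left_vel \<gamma> t \<in> span (X ` {..<m})"
    and b: "\<And>Z. Z \<in> span (X ` {..<m}) \<Longrightarrow> b Z Z = Y.coeff_sq_sum a Z"
  shows "continuous_on {0..1} (\<lambda>t. sqrt (b (left_vel \<gamma> t) (left_vel \<gamma> t)))"
proof -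
  have "continuous_on {0..1} (\<lambda>t. sqrt (Y.coeff_sq_sum a (left_vel \<gamma> t)))"
    by (intro continuous_intros Y.continuous_on_coeff_sq_sum lv(1))
  then show ?thesis by (rule continuous_on_eq) (simp add: b lv(2))
qed

lemma curve_length_restr_star_le:
  assumes k: "1 \<le> k" "k \<le> m"
    and lv: "continuous_on {0..1} (left_vel \<gamma>)" "\<And>t. t \<in> {0..1} \<Longrightarrow> left_vel \<gamma> t \<in> span (X ` {..<m})"
  shows "curve_length (restr_star g (span (Y ` {k - 1..<m}))) \<gamma>
    \<le> sigma A k * curve_length (metric_A m X A) \<gamma>"
proof -
  have "1 * curve_length (restr_star g (span (Y ` {k - 1..<m}))) \<gamma>
      \<le> sigma A k * curve_length (metric_A m X A) \<gamma>"
  proof (rule curve_length_mono_scaled)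
    show "continuous_on {0..1}
        (\<lambda>t. sqrt (restr_star g (span (Y ` {k - 1..<m})) (left_vel \<gamma> t) (left_vel \<gamma> t)))"
      by (rule continuous_on_sqrt_coeff_form[where b = "restr_star g (span (Y ` {k - 1..<m}))",
            OF lv(1) lv(2) restr_star_eq_coeff_sq_sum_Y]) auto
    show "continuous_on {0..1} (\<lambda>t. sqrt (metric_A m X A (left_vel \<gamma> t) (left_vel \<gamma> t)))"
      by (rule continuous_on_sqrt_coeff_form[where b = "metric_A m X A", OF lv(1) lv(2) metric_A_eq])
    show "1 * sqrt (restr_star g (span (Y ` {k - 1..<m})) (left_vel \<gamma> t) (left_vel \<gamma> t))
        \<le> sigma A k * sqrt (metric_A m X A (left_vel \<gamma> t) (left_vel \<gamma> t))" if "t \<in> {0..1}" for t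
      using sqrt_le_mult_sqrt restr_star_le_metric_A[OF k lv(2)[OF that]] sigma_pos[OF k]
      by simp
  qed
  then show ?thesis by simp
qed

lemma curve_length_metric_A_le:
  assumes k: "1 \<le> k" "k \<le> m"
    and lv: "continuous_on {0..1} (left_vel \<gamma>)" "\<And>t. t \<in> {0..1} \<Longrightarrow> left_vel \<gamma> t \<in> span (X ` {..<m})"
    and horizontal: "\<And>t. t \<in> {0..1} \<Longrightarrow> left_vel \<gamma> t \<in> span (Y ` {..<k})"
  shows "sigma A k * curve_length (metric_A m X A) \<gamma> \<le> curve_length g \<gamma>"
proof -
  have "sigma A k * curve_length (metric_A m X A) \<gamma> \<le> 1 * curve_length g \<gamma>"
  proof (rule curve_length_mono_scaled)
    show "continuous_on {0..1} (\<lambda>t. sqrt (metric_A m X A (left_vel \<gamma> t) (left_vel \<gamma> t)))"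
      by (rule continuous_on_sqrt_coeff_form[where b = "metric_A m X A", OF lv(1) lv(2) metric_A_eq])
    show "continuous_on {0..1} (\<lambda>t. sqrt (g (left_vel \<gamma> t) (left_vel \<gamma> t)))"
      by (rule continuous_on_sqrt_coeff_form[where b = g, OF lv(1) lv(2) self_inner_eq_coeff_sq_sum_Y])
    show "sigma A k * sqrt (metric_A m X A (left_vel \<gamma> t) (left_vel \<gamma> t))
        \<le> 1 * sqrt (g (left_vel \<gamma> t) (left_vel \<gamma> t))" if "t \<in> {0..1}" for t
      using metric_A_le_horizontal[OF k horizontal[OF that]] sigma_pos[OF k]
      by (simp add: mult_sqrt_le_sqrt)
  qed
  then show ?thesis by simp
qed

end

lemma bounded_bilinear_matrix_mult:
  "bounded_bilinear (\<lambda>(A :: real^'n^'m) (B :: real^'p^'n). A ** B)"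
proof -
  have "(A + B) ** C = A ** C + B ** C" for A B :: "real^'n^'m" and C :: "real^'p^'n"
    by (vector matrix_matrix_mult_def sum.distrib[symmetric] field_simps)
  then have "bilinear (\<lambda>(A :: real^'n^'m) (B :: real^'p^'n). A ** B)"
    unfolding bilinear_def
    by (auto intro!: linearI simp: matrix_add_ldistrib matrix_scalar_ac scalar_matrix_assoc)
  then show ?thesis using bilinear_conv_bounded_bilinear by blast
qed

lemma matrix_inv_right: "invertible A \<Longrightarrow> A ** matrix_inv A = Finite_Cartesian_Product.mat 1"
  and matrix_inv_left: "invertible A \<Longrightarrow> matrix_inv A ** A = Finite_Cartesian_Product.mat 1"
  unfolding invertible_def matrix_inv_def by (metis (mono_tags, lifting) someI_ex)+

lemma matrix_inv_unique:
  assumes "invertible A" "A ** B = Finite_Cartesian_Product.mat 1"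
  shows "B = matrix_inv A"
  by (metis assms matrix_inv_left matrix_mul_assoc matrix_mul_lid matrix_mul_rid)

lemma continuous_on_matrix_inv:
  fixes G :: "(real^'n^'n) set"
  assumes G: "compact G" and inv: "\<And>g. g \<in> G \<Longrightarrow> invertible g"
    and inv_closed: "\<And>g. g \<in> G \<Longrightarrow> matrix_inv g \<in> G"
  shows "continuous_on G matrix_inv"
proof (rule continuous_from_closed_graph[OF G])
  show "matrix_inv \<in> G \<rightarrow> G" using inv_closed by auto
  have graph: "(\<lambda>g. (g, matrix_inv g)) ` G = (G \<times> G) \<inter> (\<lambda>p. fst p ** snd p) -` {Finite_Cartesian_Product.mat 1}"
    using inv inv_closed matrix_inv_right matrix_inv_unique by fastforce
  have "continuous (at p) (\<lambda>p :: (real^'n^'n) \<times> (real^'n^'n). fst p ** snd p)" for p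
    by (intro bounded_bilinear.continuous[OF bounded_bilinear_matrix_mult] continuous_intros)
  then show "closed ((\<lambda>g. (g, matrix_inv g)) ` G)"
    unfolding graph using compact_imp_closed[OF G]
    by (intro closed_Int closed_Times continuous_closed_vimage) auto
qed

lemma smooth_curve_C1:
  assumes "smooth_curve \<gamma>"
  obtains \<gamma>' where "continuous_on {0..1} \<gamma>" "continuous_on {0..1} \<gamma>'"
    "\<And>t. t \<in> {0..1} \<Longrightarrow> (\<gamma> has_vector_derivative \<gamma>' t) (at t within {0..1})"
proof -
  obtain D where D0: "D 0 = \<gamma>"
    and D: "\<And>n t. t \<in> {0..1} \<Longrightarrow> (D n has_vector_derivative D (Suc n) t) (at t within {0..1})"
    using assms unfolding smooth_curve_def by blast
  have "continuous_on {0..1} (D n)" for n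
    unfolding continuous_on_eq_continuous_within using D has_vector_derivative_continuous by blast
  then show ?thesis using that[of "D 1"] D[of _ 0] D0 by auto
qed

lemma left_vel_eq:
  assumes "(\<gamma> has_vector_derivative \<gamma>') (at t within {0..1})" "t \<in> {0..1}"
  shows "left_vel \<gamma> t = matrix_inv (\<gamma> t) ** \<gamma>'"
  unfolding left_vel_def using vector_derivative_within_cbox[of 0 1 t \<gamma> \<gamma>'] assms by simp

lemma left_vel_continuous_on:
  assumes grp: "compact_connected_matrix_group G" and curve: "curve_in G \<gamma> p q"
  shows "continuous_on {0..1} (left_vel \<gamma>)"
proof -
  obtain \<gamma>' where \<gamma>: "continuous_on {0..1} \<gamma>" and \<gamma>': "continuous_on {0..1} \<gamma>'"
    and der: "\<And>t. t \<in> {0..1} \<Longrightarrow> (\<gamma> has_vector_derivative \<gamma>' t) (at t within {0..1})"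
    using curve smooth_curve_C1 unfolding curve_in_def by blast
  have "continuous_on G matrix_inv"
    using grp unfolding compact_connected_matrix_group_def by (intro continuous_on_matrix_inv) auto
  moreover have "\<gamma> ` {0..1} \<subseteq> G" using curve unfolding curve_in_def by auto
  ultimately have "continuous_on {0..1} (\<lambda>t. matrix_inv (\<gamma> t))"
    using continuous_on_compose2 \<gamma> by blast
  then have "continuous_on {0..1} (\<lambda>t. matrix_inv (\<gamma> t) ** \<gamma>' t)"
    by (rule bounded_bilinear.continuous_on[OF bounded_bilinear_matrix_mult _ \<gamma>'])
  then show ?thesis by (rule continuous_on_eq) (metis left_vel_eq der)
qed

lemma left_vel_in_lie_algebra_interior:
  assumes grp: "compact_connected_matrix_group G" and curve: "curve_in G \<gamma> p q"
    and t\<^sub>0: "t\<^sub>0 \<in> {0<..<1}"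
  shows "left_vel \<gamma> t\<^sub>0 \<in> lie_algebra G"
proof -
  have inv: "\<And>g. g \<in> G \<Longrightarrow> invertible g" and inv_closed: "\<And>g. g \<in> G \<Longrightarrow> matrix_inv g \<in> G"
    and mult_closed: "\<And>g h. g \<in> G \<Longrightarrow> h \<in> G \<Longrightarrow> g ** h \<in> G"
    and one: "idm \<in> G"
    using grp unfolding compact_connected_matrix_group_def by auto
  obtain \<gamma>' where der: "\<And>t. t \<in> {0..1} \<Longrightarrow> (\<gamma> has_vector_derivative \<gamma>' t) (at t within {0..1})"
    using curve smooth_curve_C1 unfolding curve_in_def by blast
  have \<gamma>G: "\<And>t. t \<in> {0..1} \<Longrightarrow> \<gamma> t \<in> G" using curve unfolding curve_in_def by auto
  define h where "h = matrix_inv (\<gamma> t\<^sub>0)"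
  define r where "r = min t\<^sub>0 (1 - t\<^sub>0)"
  have r: "r > 0" using t\<^sub>0 unfolding r_def by auto
  have ball: "t\<^sub>0 + s \<in> {0..1}" if "s \<in> ball 0 r" for s
    using that unfolding r_def by (auto simp: dist_real_def)
  \<comment> \<open>A curve through the identity defined on all of \<open>\<real>\<close>: translate back to the identity and
    cut off outside a small ball.\<close>
  define \<beta> where "\<beta> s = (if s \<in> ball 0 r then h ** \<gamma> (t\<^sub>0 + s) else idm)" for s
  have "(\<gamma> has_vector_derivative \<gamma>' t\<^sub>0) (at t\<^sub>0 within {0<..<1})"
    by (rule has_vector_derivative_within_subset[OF der]) (use t\<^sub>0 in auto)
  then have "(\<gamma> has_vector_derivative \<gamma>' t\<^sub>0) (at t\<^sub>0)"
    by (metis has_vector_derivative_within_open open_greaterThanLessThan t\<^sub>0)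
  moreover have "((\<lambda>s. t\<^sub>0 + s) has_vector_derivative 1) (at 0)"
    by (auto intro!: derivative_eq_intros simp: has_real_derivative_iff_has_vector_derivative[symmetric])
  ultimately have "((\<lambda>s. \<gamma> (t\<^sub>0 + s)) has_vector_derivative \<gamma>' t\<^sub>0) (at 0)"
    using vector_diff_chain_at[of "\<lambda>s. t\<^sub>0 + s" 1 0 \<gamma>] by (simp add: o_def)
  then have "((\<lambda>s. h ** \<gamma> (t\<^sub>0 + s)) has_vector_derivative h ** \<gamma>' t\<^sub>0) (at 0)"
    by (rule bounded_linear.has_vector_derivative
        [OF bounded_bilinear.bounded_linear_right[OF bounded_bilinear_matrix_mult]])
  then have "(\<beta> has_vector_derivative h ** \<gamma>' t\<^sub>0) (at 0)"
    by (rule has_vector_derivative_transform_within_open[of _ _ _ "ball 0 r"]) (use r in \<open>auto simp: \<beta>_def\<close>)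
  moreover have "\<beta> s \<in> G" for s
    unfolding \<beta>_def h_def using ball \<gamma>G t\<^sub>0 one by (auto intro!: mult_closed inv_closed)
  moreover have "\<beta> 0 = idm"
    unfolding \<beta>_def h_def using r matrix_inv_left[OF inv[OF \<gamma>G]] t\<^sub>0 by simp
  ultimately have "h ** \<gamma>' t\<^sub>0 \<in> lie_algebra G" unfolding lie_algebra_def by blast
  then show ?thesis using left_vel_eq[OF der, of t\<^sub>0] t\<^sub>0 unfolding h_def by auto
qed

lemma left_vel_in_lie_algebra:
  assumes grp: "compact_connected_matrix_group G" and curve: "curve_in G \<gamma> p q"
    and closed: "closed (lie_algebra G)" and t: "t \<in> {0..1}"
  shows "left_vel \<gamma> t \<in> lie_algebra G"
proof -
  \<comment> \<open>At the endpoints \<open>\<gamma>\<close> is only one-sidedly differentiable, so there membership in the Lie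
    algebra comes from continuity.\<close>
  have "left_vel \<gamma> ` closure {0<..<1} \<subseteq> lie_algebra G"
    using left_vel_continuous_on[OF grp curve] left_vel_in_lie_algebra_interior[OF grp curve]
    by (intro image_closure_subset[OF _ closed]) auto
  then show ?thesis using t by auto
qed

lemma SUP_INF_le_ereal_mult:
  fixes f g :: "'b \<Rightarrow> real" and c :: real
  assumes c: "0 < c"
    and sub: "\<And>p q. p \<in> I \<Longrightarrow> q \<in> I \<Longrightarrow> T p q \<subseteq> S p q"
    and le: "\<And>p q x. p \<in> I \<Longrightarrow> q \<in> I \<Longrightarrow> x \<in> T p q \<Longrightarrow> f x \<le> c * g x"
  shows "(SUP p\<in>I. SUP q\<in>I. INF x\<in>S p q. ereal (f x))
    \<le> ereal c * (SUP p\<in>I. SUP q\<in>I. INF x\<in>T p q. ereal (g x))"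
proof (intro SUP_least)
  fix p q assume p: "p \<in> I" and q: "q \<in> I"
  have "(INF x\<in>S p q. ereal (f x)) / ereal c \<le> (INF x\<in>T p q. ereal (g x))"
  proof (rule INF_greatest)
    fix x assume x: "x \<in> T p q"
    have "(INF x\<in>S p q. ereal (f x)) \<le> ereal (f x)" using sub[OF p q] x by (intro INF_lower) auto
    also have "\<dots> \<le> ereal c * ereal (g x)" using le[OF p q x] by simp
    finally show "(INF x\<in>S p q. ereal (f x)) / ereal c \<le> ereal (g x)"
      using ereal_divide_le_pos c by simp
  qed
  also have "\<dots> \<le> (SUP p\<in>I. SUP q\<in>I. INF x\<in>T p q. ereal (g x))"
    by (rule SUP_upper2[OF p], rule SUP_upper[OF q])
  finally show "(INF x\<in>S p q. ereal (f x))
      \<le> ereal c * (SUP p\<in>I. SUP q\<in>I. INF x\<in>T p q. ereal (g x))"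
    using ereal_divide_le_pos c by simp
qed

theorem proposition3p3:
  fixes G :: "('n::finite) sqm set"
    and gI :: "'n sqm \<Rightarrow> 'n sqm \<Rightarrow> real"
    and X :: "nat \<Rightarrow> 'n sqm"
    and m k :: nat
    and A P :: "real mat"
  assumes grp: "compact_connected_matrix_group G"
    and m2: "m \<ge> 2"
    and gI_bil: "bilinear gI"
    and gI_sym: "\<forall>Z\<in>lie_algebra G. \<forall>W\<in>lie_algebra G. gI Z W = gI W Z"
    and gI_pos: "\<forall>Z\<in>lie_algebra G. Z \<noteq> 0 \<longrightarrow> gI Z Z > 0"
    and gI_Ad: "\<forall>g\<in>G. \<forall>Z\<in>lie_algebra G. \<forall>W\<in>lie_algebra G.
                  gI (g ** Z ** matrix_inv g) (g ** W ** matrix_inv g) = gI Z W"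
    and X_in: "\<forall>i<m. X i \<in> lie_algebra G"
    and X_span: "lie_algebra G = span (X ` {..<m})"
    and X_on: "\<forall>i<m. \<forall>j<m. gI (X i) (X j) = (if i = j then 1 else 0)"
    and A_GL: "A \<in> carrier_mat m m" "invertible_mat A"
    and P_sorts: "sorts m P A"
    and k: "1 \<le> k" "k \<le> m"
  shows "diam_form G (restr_star gI (span (basis_tw m X P ` {k-1..<m}))) / ereal (sigma A k)
           \<le> diam_form G (metric_A m X A)
       \<and> diam_form G (metric_A m X A)
           \<le> diam_sr G (span (basis_tw m X P ` {..<k})) gI / ereal (sigma A k)"
proof -
  interpret sorted_frame gI X m A P
    by unfold_locales (use gI_bil X_on A_GL P_sorts in auto)
  have \<sigma>: "0 < sigma A k" using sigma_pos[OF k] .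
  have lv: "continuous_on {0..1} (left_vel \<gamma>)" "\<And>t. t \<in> {0..1} \<Longrightarrow> left_vel \<gamma> t \<in> span (X ` {..<m})"
    if "curve_in G \<gamma> p q" for \<gamma> p q
    using left_vel_continuous_on[OF grp that] left_vel_in_lie_algebra[OF grp that] X_span by auto
  have "diam_form G (restr_star gI (span (basis_tw m X P ` {k-1..<m})))
      \<le> ereal (sigma A k) * diam_form G (metric_A m X A)"
    unfolding diam_form_def using \<sigma> curve_length_restr_star_le[OF k lv]
    by (intro SUP_INF_le_ereal_mult) auto
  moreover have "diam_form G (metric_A m X A)
      \<le> ereal (1 / sigma A k) * diam_sr G (span (basis_tw m X P ` {..<k})) gI"
    unfolding diam_form_def diam_sr_def using \<sigma> curve_length_metric_A_le[OF k lv]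
    by (intro SUP_INF_le_ereal_mult) (auto simp: field_simps)
  moreover have "ereal (1 / sigma A k) * D = D / ereal (sigma A k)" for D
    using \<sigma> by (simp add: divide_ereal_def mult.commute inverse_eq_divide)
  ultimately show ?thesis using \<sigma> ereal_divide_le_pos by simp
qed

end
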